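(* Let $k$ be an algebraically closed field of characteristic $p>0$ and $n\ge1$. Let $\mathbb{E}_{\ge0}(n,k) = \coprod_{r\ge0}\mathrm{Hom}_{\mathrm{gr}}((\mathbb{Z}/p\mathbb{Z})^r,\mathrm{GL}(n,k))$ and let $\pi : \mathbb{E}_{\ge0}(n,k)\to\mathrm{Mat}(n,k[T])^E$ be defined as follows: the unique element $\rho_0$ with $r=0$ is sent to $I_n$; for $r\ge1$, an element $\rho\in\mathrm{Hom}_{\mathrm{gr}}((\mathbb{Z}/p\mathbb{Z})^r,\mathrm{GL}(n,k))$, written uniquely as $\rho = \rho_{N_1,\ldots,N_r}$ with $(N_1,\ldots,N_r)\in\mathcal{N}_r(n,k)$, is sent to $\prod_{i=1}^r \mathrm{Exp}(T^{p^{i-1}}N_i)$. Then $\pi$ is surjective.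
   Context: A matrix $A(T)\in\mathrm{Mat}(n,k[T])$ is an exponential matrix if $A(T)A(T') = A(T+T')$ in $\mathrm{Mat}(n,k[T,T'])$ and $A(0)=I_n$; $\mathrm{Mat}(n,k[T])^E$ is the set of exponential matrices. $\mathcal{N}_r(n,k)$ is the set of $(N_1,\ldots,N_r)\in\mathrm{Mat}(n,k)^r$ with $N_i^p=O_n$ and $N_iN_j=N_jN_i$ for all $i,j$, and $\rho_{N_1,\ldots,N_r}(a_1,\ldots,a_r) = \prod_{i=1}^r(I_n+N_i)^{a_i}$; every group homomorphism $(\mathbb{Z}/p\mathbb{Z})^r\to\mathrm{GL}(n,k)$ is of this form for a unique tuple. For a matrix $M$ over a commutative $k$-algebra with $M^p=O_n$, $\mathrm{Exp}(M) := \sum_{i=0}^{p-1}\frac{1}{i!}M^i$. *)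

theory Defs
  imports "HOL-Analysis.Analysis" "HOL-Computational_Algebra.Polynomial"
begin

text \<open>n x n matrices are rendered as 'b^'n^'n with 'n a finite index type (n = CARD('n) \<ge> 1).
  Matrix product is (**), identity is mat 1.\<close>

definition mpow :: "'b::semiring_1^'n^'n \<Rightarrow> nat \<Rightarrow> 'b^'n^'n" where
  "mpow M i = (((**) M) ^^ i) (mat 1)"

text \<open>Polynomial ring k[T,T'] is rendered as ('a poly) poly: inner variable T, outer variable T'.\<close>

definition in_T :: "'a::comm_ring_1 poly \<Rightarrow> 'a poly poly" where
  "in_T f = [:f:]"                                   \<comment> \<open>f(T)\<close>

definition in_T' :: "'a::comm_ring_1 poly \<Rightarrow> 'a poly poly" where
  "in_T' f = map_poly (\<lambda>c. [:c:]) f"                 \<comment> \<open>f(T')\<close>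

definition in_TT' :: "'a::comm_ring_1 poly \<Rightarrow> 'a poly poly" where
  "in_TT' f = poly (map_poly (\<lambda>c. [:[:c:]:]) f) ([:[:0, 1:]:] + [:0, 1:])"  \<comment> \<open>f(T+T')\<close>

definition exp_matrix :: "'a::comm_ring_1 poly^'n^'n \<Rightarrow> bool" where
  "exp_matrix A \<longleftrightarrow>
     (\<chi> i j. in_T (A $ i $ j)) ** (\<chi> i j. in_T' (A $ i $ j)) = (\<chi> i j. in_TT' (A $ i $ j))
     \<and> (\<chi> i j. poly (A $ i $ j) 0) = mat 1"

text \<open>The tuples N_1..N_r are lists of length r (N_i = N ! (i-1)).\<close>

definition Ncal :: "nat \<Rightarrow> ('a::field^'n^'n) list set" where
  "Ncal r = {N. length N = r \<and> (\<forall>i<r. mpow (N ! i) CHAR('a) = 0)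
              \<and> (\<forall>i<r. \<forall>j<r. (N ! i) ** (N ! j) = (N ! j) ** (N ! i))}"

text \<open>(Z/pZ)^r as lists of length r with entries < p, componentwise addition mod p.\<close>

definition Zp_pow :: "nat \<Rightarrow> nat \<Rightarrow> nat list set" where
  "Zp_pow p r = {a. length a = r \<and> (\<forall>x\<in>set a. x < p)}"

definition Zp_add :: "nat \<Rightarrow> nat list \<Rightarrow> nat list \<Rightarrow> nat list" where
  "Zp_add p a b = map2 (\<lambda>x y. (x + y) mod p) a b"

text \<open>Group homomorphisms (Z/pZ)^r \<rightarrow> GL(n,k), p = CHAR('a) (values outside the domain are ignored).\<close>

definition grp_hom :: "nat \<Rightarrow> (nat list \<Rightarrow> 'a::field^'n^'n) \<Rightarrow> bool" where
  "grp_hom r \<rho> \<longleftrightarrow> (\<forall>a\<in>Zp_pow CHAR('a) r. invertible (\<rho> a))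
     \<and> (\<forall>a\<in>Zp_pow CHAR('a) r. \<forall>b\<in>Zp_pow CHAR('a) r.
           \<rho> (Zp_add CHAR('a) a b) = \<rho> a ** \<rho> b)"

fun mprod_list :: "('b::semiring_1^'n^'n) list \<Rightarrow> 'b^'n^'n" where
  "mprod_list [] = mat 1"
| "mprod_list (M # Ms) = M ** mprod_list Ms"

definition rho_N :: "('a::field^'n^'n) list \<Rightarrow> nat list \<Rightarrow> 'a^'n^'n" where
  "rho_N N a = mprod_list (map2 (\<lambda>M e. mpow (mat 1 + M) e) N a)"

definition Exp :: "'a::field poly^'n^'n \<Rightarrow> 'a poly^'n^'n" where
  "Exp M = (\<Sum>i<CHAR('a). (\<chi> j l. smult (inverse (of_nat (fact i))) (mpow M i $ j $ l)))"

definition Tpow_mat :: "nat \<Rightarrow> 'a::field^'n^'n \<Rightarrow> 'a poly^'n^'n" where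
  "Tpow_mat m N = (\<chi> j l. monom (N $ j $ l) m)"

definition pi_map :: "nat \<Rightarrow> (nat list \<Rightarrow> 'a::field^'n^'n) \<Rightarrow> 'a poly^'n^'n" where
  "pi_map r \<rho> = (if r = 0 then mat 1 else
     (let N = (THE N. N \<in> Ncal r \<and> (\<forall>a\<in>Zp_pow CHAR('a) r. \<rho> a = rho_N N a))
      in mprod_list (map (\<lambda>i. Exp (Tpow_mat (CHAR('a) ^ i) (N ! i))) [0..<r])))"

end

theory Submission
  imports Defs
begin

text \<open>Write A(T) = \<Sum>_m T^m c(m). Comparing the coefficients of T^i T'^j in
  A(T) A(T') = A(T + T') gives c(0) = I and c(i) c(j) = (i + j choose i) c(i + j).
  In characteristic p these relations force c(m + p k) = c(1)^m / m! \<cdot> c(p k) for m < p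
  and c(1)^p = 0, and since (p n choose p k) = (n choose k) mod p, the subsequence c(p k)
  satisfies the same relations. Peeling off the base-p digits of the index therefore
  factors A(T) as the product of the Exp(T^(p^i) c(p^i)). The matrices N_i = c(p^i)
  commute and are p-nilpotent, so \<rho>_N is a homomorphism, and \<pi> sends it to A.\<close>

lemma mpow_0 [simp]: "mpow M 0 = mat 1"
  by (simp add: mpow_def)

lemma mpow_Suc: "mpow M (Suc k) = M ** mpow M k"
  by (simp add: mpow_def)

lemma mpow_1 [simp]: "mpow M (Suc 0) = M"
  by (simp add: mpow_def)

lemma mpow_add: "mpow M (a + b) = mpow M a ** mpow M b"
  by (induction a) (simp_all add: mpow_Suc matrix_mul_assoc)

lemma mpow_mult: "mpow M (a * b) = mpow (mpow M a) b"
  by (induction b) (simp_all add: mpow_Suc mpow_add)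

lemma mpow_mat_1 [simp]: "mpow (mat 1) k = mat 1"
  by (induction k) (simp_all add: mpow_Suc)

lemma mpow_mod:
  assumes "mpow U p = mat 1"
  shows "mpow U (n mod p) = mpow U n"
proof -
  have "mpow U n = mpow U (n mod p) ** mpow (mpow U p) (n div p)"
    by (metis mpow_add mpow_mult mod_mult_div_eq)
  then show ?thesis
    using assms by simp
qed

lemma commute_mpow: "X ** Y = Y ** X \<Longrightarrow> X ** mpow Y k = mpow Y k ** X"
  by (induction k) (simp_all add: mpow_Suc matrix_mul_assoc, metis matrix_mul_assoc)

lemma invertible_mat_1: "invertible (mat 1)"
  unfolding invertible_def by (intro exI[of _ "mat 1"]) simp

lemma invertible_mpow: "invertible U \<Longrightarrow> invertible (mpow U k)"
  by (induction k) (auto simp: mpow_Suc intro: invertible_mult invertible_mat_1)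

lemma invertible_if_mpow_eq_mat_1:
  fixes U :: "'a::field^'n^'n"
  assumes "mpow U p = mat 1" and "0 < p"
  shows "invertible U"
  unfolding invertible_right_inverse
proof
  have "U ** mpow U (p - 1) = mpow U (Suc (p - 1))"
    by (simp only: mpow_Suc)
  then show "U ** mpow U (p - 1) = mat 1"
    using assms by simp
qed

lemma matrix_add_rdistrib: "(B + C) ** A = B ** A + C ** A"
  by (simp add: matrix_matrix_mult_def vec_eq_iff sum.distrib distrib_right)

lemma matrix_mul_sum_right: "A ** (\<Sum>i\<in>S. f i) = (\<Sum>i\<in>S. A ** f i)"
  by (induction S rule: infinite_finite_induct) (simp_all add: matrix_add_ldistrib)

lemma matrix_mul_sum_left: "(\<Sum>i\<in>S. f i) ** A = (\<Sum>i\<in>S. f i ** A)"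
  by (induction S rule: infinite_finite_induct) (simp_all add: matrix_add_rdistrib)

definition smult_mat :: "'b::semiring_1 \<Rightarrow> 'b^'n^'m \<Rightarrow> 'b^'n^'m" where
  "smult_mat a M = (\<chi> i j. a * M $ i $ j)"

lemma smult_mat_1 [simp]: "smult_mat 1 M = M"
  by (simp add: smult_mat_def vec_eq_iff)

lemma smult_mat_0 [simp]: "smult_mat 0 M = 0"
  by (simp add: smult_mat_def vec_eq_iff)

lemma smult_mat_smult_mat [simp]: "smult_mat a (smult_mat b M) = smult_mat (a * b) M"
  by (simp add: smult_mat_def vec_eq_iff mult.assoc)

lemma smult_mat_add_left: "smult_mat (a + b) M = smult_mat a M + smult_mat b M"
  by (simp add: smult_mat_def vec_eq_iff distrib_right)

lemma smult_mat_matrix_mul: "smult_mat a M ** N = smult_mat a (M ** N)"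
  by (simp add: smult_mat_def matrix_matrix_mult_def vec_eq_iff sum_distrib_left mult.assoc)

lemma matrix_mul_smult_mat: "(M :: 'b::comm_semiring_1^_^_) ** smult_mat a N = smult_mat a (M ** N)"
  by (simp add: smult_mat_def matrix_matrix_mult_def vec_eq_iff sum_distrib_left mult_ac)

lemma mpow_one_plus_binomial:
  fixes N :: "'a::comm_semiring_1^'n^'n"
  shows "mpow (mat 1 + N) m = (\<Sum>k\<le>m. smult_mat (of_nat (m choose k)) (mpow N k))"
proof (induction m)
  case 0
  then show ?case by simp
next
  case (Suc m)
  define S where "S = (\<Sum>k\<le>m. smult_mat (of_nat (m choose k)) (mpow N k))"
  define S' where "S' = (\<Sum>k\<le>m. smult_mat (of_nat (m choose Suc k)) (mpow N (Suc k)))"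
  have S_shift: "S = mat 1 + S'"
  proof -
    have "S = (\<Sum>k\<le>Suc m. smult_mat (of_nat (m choose k)) (mpow N k))"
      unfolding S_def by (simp add: sum.atMost_Suc binomial_eq_0)
    then show ?thesis
      unfolding S'_def by (subst (asm) sum.atMost_Suc_shift) simp
  qed
  have NS: "N ** S = (\<Sum>k\<le>m. smult_mat (of_nat (m choose k)) (mpow N (Suc k)))"
    unfolding S_def matrix_mul_sum_right matrix_mul_smult_mat mpow_Suc ..
  have "(\<Sum>k\<le>Suc m. smult_mat (of_nat (Suc m choose k)) (mpow N k)) =
      mat 1 + (\<Sum>k\<le>m. smult_mat (of_nat (Suc m choose Suc k)) (mpow N (Suc k)))"
    by (subst sum.atMost_Suc_shift) simp
  also have "\<dots> = mat 1 + (N ** S + S')"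
    unfolding NS S'_def by (simp add: smult_mat_add_left sum.distrib)
  also have "\<dots> = (mat 1 + N) ** S"
    by (simp add: matrix_add_rdistrib S_shift add_ac)
  finally show ?case
    unfolding mpow_Suc Suc.IH S_def by simp
qed

lemma mpow_one_plus_CHAR:
  fixes N :: "'a::comm_semiring_1^'n^'n"
  assumes p: "prime CHAR('a)" and N: "mpow N CHAR('a) = 0"
  shows "mpow (mat 1 + N) CHAR('a) = mat 1"
proof -
  have "smult_mat (of_nat (CHAR('a) choose k)) (mpow N k) = 0" if "0 < k" "k \<le> CHAR('a)" for k
  proof (cases "k = CHAR('a)")
    case False
    then have "CHAR('a) dvd (CHAR('a) choose k)"
      using that p by (intro dvd_choose_prime) auto
    then have "(of_nat (CHAR('a) choose k) :: 'a) = 0"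
      by (simp add: of_nat_eq_0_iff_char_dvd)
    then show ?thesis
      by simp
  qed (use N in simp)
  then have "mpow (mat 1 + N) CHAR('a) = (\<Sum>k\<in>{0}. smult_mat (of_nat (CHAR('a) choose k)) (mpow N k))"
    unfolding mpow_one_plus_binomial by (intro sum.mono_neutral_right) auto
  then show ?thesis
    by simp
qed

definition divided_power_seq :: "(nat \<Rightarrow> 'a::comm_semiring_1^'n^'n) \<Rightarrow> bool" where
  "divided_power_seq c \<longleftrightarrow>
     c 0 = mat 1 \<and> (\<forall>i j. c i ** c j = smult_mat (of_nat ((i + j) choose i)) (c (i + j)))"

lemma divided_power_seq_commute:
  assumes "divided_power_seq c"
  shows "c i ** c j = c j ** c i"
  using assms binomial_symmetric[of i "i + j"] unfolding divided_power_seq_def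
  by (simp add: add.commute)

lemma divided_power_seq_mpow:
  assumes c: "divided_power_seq (c :: nat \<Rightarrow> 'a::comm_semiring_1^'n^'n)"
  shows "mpow (c 1) m ** c (CHAR('a) * k) = smult_mat (of_nat (fact m)) (c (m + CHAR('a) * k))"
proof (induction m)
  case 0
  then show ?case by simp
next
  case (Suc m)
  have "of_nat ((1 + (m + CHAR('a) * k)) choose 1) = (of_nat (Suc m) :: 'a)"
    by simp
  then have step: "c 1 ** c (m + CHAR('a) * k) = smult_mat (of_nat (Suc m)) (c (Suc m + CHAR('a) * k))"
    using c unfolding divided_power_seq_def by (metis add_Suc plus_1_eq_Suc)
  have "mpow (c 1) (Suc m) ** c (CHAR('a) * k) = c 1 ** smult_mat (of_nat (fact m)) (c (m + CHAR('a) * k))"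
    by (simp only: mpow_Suc Suc.IH flip: matrix_mul_assoc)
  also have "\<dots> = smult_mat (of_nat (fact (Suc m))) (c (Suc m + CHAR('a) * k))"
    unfolding matrix_mul_smult_mat step by (simp add: algebra_simps)
  finally show ?case .
qed

lemma divided_power_seq_nilpotent:
  assumes c: "divided_power_seq (c :: nat \<Rightarrow> 'a::comm_semiring_1^'n^'n)" and "0 < CHAR('a)"
  shows "mpow (c 1) CHAR('a) = 0"
proof -
  have "(of_nat (fact CHAR('a)) :: 'a) = 0"
    using assms by (simp add: of_nat_eq_0_iff_char_dvd dvd_fact)
  then show ?thesis
    using divided_power_seq_mpow[OF c, of "CHAR('a)" 0] c by (simp add: divided_power_seq_def)
qed

lemma of_nat_fact_neq_0_below_CHAR:
  assumes "prime CHAR('a::semiring_1)" and "m < CHAR('a)"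
  shows "(of_nat (fact m) :: 'a) \<noteq> 0"
  using assms by (simp add: of_nat_eq_0_iff_char_dvd prime_dvd_fact_iff)

lemma divided_power_seq_digit:
  assumes c: "divided_power_seq (c :: nat \<Rightarrow> 'a::field^'n^'n)"
    and "prime CHAR('a)" and "m < CHAR('a)"
  shows "c (m + CHAR('a) * k) = smult_mat (inverse (of_nat (fact m))) (mpow (c 1) m) ** c (CHAR('a) * k)"
  using divided_power_seq_mpow[OF c, of m k] of_nat_fact_neq_0_below_CHAR[OF assms(2,3)]
  by (simp add: smult_mat_matrix_mul)

text \<open>Lucas' congruence for multiples of the characteristic, read off from
  \<open>(1 + X) ^ (p * n) = (1 + X ^ p) ^ n\<close>.\<close>

lemma of_nat_choose_mult_CHAR:
  assumes p: "prime CHAR('a::comm_ring_1)"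
  shows "(of_nat ((CHAR('a) * n) choose (CHAR('a) * k)) :: 'a) = of_nat (n choose k)"
proof (cases "k \<le> n")
  case False
  then show ?thesis
    using p prime_gt_0_nat by (simp add: binomial_eq_0)
next
  case True
  let ?p = "CHAR('a)"
  define X :: "'a poly" where "X = [:0, 1:]"
  have "(1 + X) ^ ?p = 1 + X ^ ?p"
    by (subst freshmans_dream) (simp_all add: p)
  then have "(1 + X) ^ (?p * n) = (X ^ ?p + 1) ^ n"
    by (simp add: power_mult add.commute)
  also have "\<dots> = (\<Sum>j\<le>n. monom (of_nat (n choose j)) (?p * j))"
    by (simp add: binomial_ring power_mult X_def monom_altdef of_nat_mult_conv_smult)
  finally have "coeff ((1 + X) ^ (?p * n)) (?p * k) = of_nat (n choose k)"
    using True p prime_gt_0_nat by (simp add: coeff_sum)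
  moreover have "coeff ((1 + X) ^ (?p * n)) (?p * k) = of_nat ((?p * n) choose (?p * k))"
    using coeff_linear_poly_power[of "?p * k" "?p * n" 1 1] True
    by (simp add: X_def one_pCons)
  ultimately show ?thesis
    by simp
qed

lemma divided_power_seq_CHAR_multiples:
  assumes c: "divided_power_seq (c :: nat \<Rightarrow> 'a::comm_ring_1^'n^'n)" and p: "prime CHAR('a)"
  shows "divided_power_seq (\<lambda>m. c (CHAR('a) * m))"
  unfolding divided_power_seq_def
proof (intro conjI allI)
  show "c (CHAR('a) * 0) = mat 1"
    using c by (simp add: divided_power_seq_def)
  fix i j
  have "c (CHAR('a) * i) ** c (CHAR('a) * j) =
      smult_mat (of_nat ((CHAR('a) * (i + j)) choose (CHAR('a) * i))) (c (CHAR('a) * (i + j)))"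
    using c unfolding divided_power_seq_def distrib_left by blast
  then show "c (CHAR('a) * i) ** c (CHAR('a) * j) =
      smult_mat (of_nat ((i + j) choose i)) (c (CHAR('a) * (i + j)))"
    by (simp only: of_nat_choose_mult_CHAR[OF p])
qed

lemma divided_power_seq_CHAR_power_multiples:
  assumes "divided_power_seq (c :: nat \<Rightarrow> 'a::comm_ring_1^'n^'n)" and "prime CHAR('a)"
  shows "divided_power_seq (\<lambda>m. c (CHAR('a) ^ i * m))"
proof (induction i)
  case 0
  then show ?case using assms(1) by simp
next
  case (Suc i)
  from divided_power_seq_CHAR_multiples[OF Suc assms(2)] show ?case
    by (simp add: mult_ac)
qed

lemma Tpow_mat_mult: "Tpow_mat a M ** Tpow_mat b N = Tpow_mat (a + b) (M ** N)"
  by (simp add: matrix_matrix_mult_def Tpow_mat_def vec_eq_iff mult_monom monom_sum)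

lemma Tpow_mat_0_mat_1 [simp]: "Tpow_mat 0 (mat 1) = mat 1"
  by (simp add: Tpow_mat_def mat_def vec_eq_iff)

lemma mpow_Tpow_mat: "mpow (Tpow_mat q N) i = Tpow_mat (q * i) (mpow N i)"
  by (induction i) (simp_all add: mpow_Suc Tpow_mat_mult)

lemma Exp_Tpow_mat:
  "Exp (Tpow_mat q (N :: 'a::field^'n^'n)) =
     (\<Sum>i<CHAR('a). Tpow_mat (q * i) (smult_mat (inverse (of_nat (fact i))) (mpow N i)))"
  unfolding Exp_def mpow_Tpow_mat
  by (intro sum.cong refl) (simp add: Tpow_mat_def smult_mat_def vec_eq_iff smult_monom)

definition mat_series :: "nat \<Rightarrow> nat \<Rightarrow> (nat \<Rightarrow> 'a::field^'n^'n) \<Rightarrow> 'a poly^'n^'n" where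
  "mat_series q M c = (\<Sum>m<M. Tpow_mat (q * m) (c m))"

text \<open>Splitting off the lowest base-\<open>p\<close> digit \<open>m = i + p m'\<close> of the summation index.\<close>

lemma mat_series_CHAR_power_Suc:
  assumes c: "divided_power_seq (c :: nat \<Rightarrow> 'a::field^'n^'n)" and p: "prime CHAR('a)"
  shows "mat_series q (CHAR('a) ^ Suc r) c =
    Exp (Tpow_mat q (c 1)) ** mat_series (q * CHAR('a)) (CHAR('a) ^ r) (\<lambda>m. c (CHAR('a) * m))"
proof -
  let ?p = "CHAR('a)"
  let ?t = "\<lambda>m. Tpow_mat (q * m) (c m)"
  have "Exp (Tpow_mat q (c 1)) ** mat_series (q * ?p) (?p ^ r) (\<lambda>m. c (?p * m)) =
      (\<Sum>m'<?p ^ r. \<Sum>i<?p. Tpow_mat (q * i) (smult_mat (inverse (of_nat (fact i))) (mpow (c 1) i))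
         ** Tpow_mat (q * ?p * m') (c (?p * m')))"
    unfolding Exp_Tpow_mat mat_series_def matrix_mul_sum_left matrix_mul_sum_right ..
  also have "\<dots> = (\<Sum>m'<?p ^ r. \<Sum>i<?p. ?t (i + m' * ?p))"
  proof (intro sum.cong refl)
    fix m' i
    assume "i \<in> {..<?p}"
    then have "c (i + ?p * m') = smult_mat (inverse (of_nat (fact i))) (mpow (c 1) i) ** c (?p * m')"
      by (simp add: divided_power_seq_digit[OF c p])
    moreover have "q * i + q * ?p * m' = q * (i + m' * ?p)"
      by (simp add: algebra_simps)
    ultimately show "Tpow_mat (q * i) (smult_mat (inverse (of_nat (fact i))) (mpow (c 1) i))
        ** Tpow_mat (q * ?p * m') (c (?p * m')) = ?t (i + m' * ?p)"
      by (simp only: Tpow_mat_mult mult.commute[of m'])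
  qed
  also have "\<dots> = mat_series q (?p ^ Suc r) c"
    unfolding mat_series_def power_Suc2 sum_mult_product ..
  finally show ?thesis ..
qed

lemma mat_series_CHAR_power_eq_prod:
  assumes "divided_power_seq (c :: nat \<Rightarrow> 'a::field^'n^'n)" and p: "prime CHAR('a)"
  shows "mat_series q (CHAR('a) ^ r) c =
    mprod_list (map (\<lambda>i. Exp (Tpow_mat (q * CHAR('a) ^ i) (c (CHAR('a) ^ i)))) [0..<r])"
  using assms(1)
proof (induction r arbitrary: q c)
  case 0
  then show ?case
    by (simp add: mat_series_def divided_power_seq_def)
next
  case (Suc r)
  let ?p = "CHAR('a)"
  have "mat_series q (?p ^ Suc r) c =
      Exp (Tpow_mat q (c 1)) ** mat_series (q * ?p) (?p ^ r) (\<lambda>m. c (?p * m))"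
    by (rule mat_series_CHAR_power_Suc[OF Suc.prems p])
  also have "\<dots> = Exp (Tpow_mat q (c 1)) **
      mprod_list (map (\<lambda>i. Exp (Tpow_mat (q * ?p * ?p ^ i) (c (?p * ?p ^ i)))) [0..<r])"
    by (simp only: Suc.IH[OF divided_power_seq_CHAR_multiples[OF Suc.prems p]])
  also have "\<dots> = mprod_list (map (\<lambda>i. Exp (Tpow_mat (q * ?p ^ i) (c (?p ^ i)))) [0..<Suc r])"
    by (simp add: upt_conv_Cons o_def mult.assoc del: upt_Suc flip: map_Suc_upt)
  finally show ?case .
qed

definition coeff_mat :: "'a::zero poly^'n^'m \<Rightarrow> nat \<Rightarrow> 'a^'n^'m" where
  "coeff_mat A m = (\<chi> j l. coeff (A $ j $ l) m)"

lemma coeff_coeff_T_plus_T'_mult: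
  fixes F :: "'a::comm_ring_1 poly poly"
  shows "coeff (coeff (([:[:0, 1:]:] + [:0, 1:]) * F) b) a =
    (if a = 0 then 0 else coeff (coeff F b) (a - 1)) + (if b = 0 then 0 else coeff (coeff F (b - 1)) a)"
  by (cases a; cases b) (simp_all add: algebra_simps coeff_pCons)

lemma coeff_coeff_in_TT':
  fixes f :: "'a::comm_ring_1 poly"
  shows "coeff (coeff (in_TT' f) b) a = of_nat ((a + b) choose a) * coeff f (a + b)"
proof (induction f arbitrary: a b rule: pCons_induct)
  case 0
  then show ?case by (simp add: in_TT'_def)
next
  case (pCons x f)
  have in_TT'_pCons: "in_TT' (pCons x f) = [:[:x:]:] + ([:[:0, 1:]:] + [:0, 1:]) * in_TT' f"
    by (simp add: in_TT'_def map_poly_pCons)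
  show ?case
  proof (cases "a = 0 \<or> b = 0")
    case True
    then show ?thesis
      by (auto simp: in_TT'_pCons coeff_coeff_T_plus_T'_mult pCons.IH coeff_pCons binomial_eq_0
          split: nat.split)
  next
    case False
    then obtain a' b' where a: "a = Suc a'" and b: "b = Suc b'"
      by (metis not0_implies_Suc)
    have "coeff (coeff (in_TT' (pCons x f)) b) a =
        of_nat ((a' + b) choose a') * coeff f (a' + b) + of_nat ((a + b') choose a) * coeff f (a + b')"
      by (simp add: a b in_TT'_pCons coeff_coeff_T_plus_T'_mult pCons.IH)
    also have "\<dots> = of_nat ((a + b) choose a) * coeff (pCons x f) (a + b)"
      by (simp add: a b coeff_pCons algebra_simps)
    finally show ?thesis .
  qed
qed

lemma exp_matrix_divided_power_seq:
  assumes "exp_matrix (A :: 'a::field poly^'n^'n)"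
  shows "divided_power_seq (coeff_mat A)"
  unfolding divided_power_seq_def
proof (intro conjI allI)
  have "(\<chi> i j. poly (A $ i $ j) 0) = mat 1"
    using assms by (simp add: exp_matrix_def)
  then show "coeff_mat A 0 = mat 1"
    by (simp add: coeff_mat_def poly_0_coeff_0)
  fix a b
  have E: "(\<chi> i j. in_T (A $ i $ j)) ** (\<chi> i j. in_T' (A $ i $ j)) = (\<chi> i j. in_TT' (A $ i $ j))"
    using assms by (simp add: exp_matrix_def)
  have "(coeff_mat A a ** coeff_mat A b) $ j $ l =
      smult_mat (of_nat ((a + b) choose a)) (coeff_mat A (a + b)) $ j $ l" for j l
  proof -
    have "(coeff_mat A a ** coeff_mat A b) $ j $ l =
        coeff (coeff (((\<chi> i j. in_T (A $ i $ j)) ** (\<chi> i j. in_T' (A $ i $ j))) $ j $ l) b) a"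
      by (simp add: matrix_matrix_mult_def coeff_mat_def coeff_sum in_T_def in_T'_def
          coeff_map_poly mult.commute)
    then show ?thesis
      by (simp add: E coeff_coeff_in_TT' smult_mat_def coeff_mat_def)
  qed
  then show "coeff_mat A a ** coeff_mat A b = smult_mat (of_nat ((a + b) choose a)) (coeff_mat A (a + b))"
    by (simp add: vec_eq_iff)
qed

lemma mat_series_coeff_mat:
  fixes A :: "'a::field poly^'n^'n"
  assumes "\<And>j l. degree (A $ j $ l) < M"
  shows "mat_series 1 M (coeff_mat A) = A"
proof -
  have "mat_series 1 M (coeff_mat A) $ j $ l = A $ j $ l" for j l
  proof -
    obtain M' where "M = Suc M'"
      using assms[of j l] less_imp_Suc_add by blast
    then show ?thesis
      using assms[of j l]
      by (simp add: mat_series_def Tpow_mat_def coeff_mat_def lessThan_Suc_atMost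
          poly_as_sum_of_monoms')
  qed
  then show ?thesis
    by (simp add: vec_eq_iff)
qed

lemma ex_degree_less_power:
  fixes A :: "'a::zero poly^'n^'m"
  assumes "1 < b"
  shows "\<exists>r>0. \<forall>j l. degree (A $ j $ l) < b ^ r"
proof (intro exI conjI allI)
  define D where "D = Max (range (\<lambda>(j, l). degree (A $ j $ l)))"
  fix j l
  have "degree (A $ j $ l) \<le> D"
    unfolding D_def by (rule Max_ge) auto
  also have "D < 2 ^ Suc D"
    using less_exp[of "Suc D"] by simp
  also have "\<dots> \<le> b ^ Suc D"
    using assms by (intro power_mono) auto
  finally show "degree (A $ j $ l) < b ^ Suc D" .
qed simp

lemma Ncal_iff:
  "N \<in> Ncal r \<longleftrightarrow> length N = r \<and> (\<forall>M\<in>set N. mpow M CHAR('a) = 0)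
     \<and> (\<forall>M\<in>set N. \<forall>M'\<in>set N. M ** M' = M' ** (M :: 'a::field^'n^'n))"
proof -
  have "(\<forall>M\<in>set N. mpow M CHAR('a) = 0) \<longleftrightarrow> (\<forall>i<length N. mpow (N ! i) CHAR('a) = 0)"
    by (simp add: all_set_conv_all_nth)
  moreover have "(\<forall>M\<in>set N. \<forall>M'\<in>set N. M ** M' = M' ** M) \<longleftrightarrow>
      (\<forall>i<length N. \<forall>j<length N. N ! i ** N ! j = N ! j ** N ! i)"
    by (simp add: all_set_conv_all_nth)
  ultimately show ?thesis
    unfolding Ncal_def by auto
qed
lemma commute_mprod_list:
  "(\<forall>M\<in>set Ms. X ** M = M ** X) \<Longrightarrow> X ** mprod_list Ms = mprod_list Ms ** X"
  by (induction Ms) (simp_all, metis matrix_mul_assoc)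

lemma invertible_mprod_list:
  "(\<forall>M\<in>set Ms. invertible M) \<Longrightarrow> invertible (mprod_list Ms)"
  by (induction Ms) (simp_all add: invertible_mat_1 invertible_mult)

lemma rho_N_Nil [simp]: "rho_N [] a = mat 1"
  by (simp add: rho_N_def)

lemma rho_N_Cons [simp]: "rho_N (M # N) (x # a) = mpow (mat 1 + M) x ** rho_N N a"
  by (simp add: rho_N_def)

lemma rho_N_replicate_0 [simp]: "length N = k \<Longrightarrow> rho_N N (replicate k 0) = mat 1"
  by (induction N arbitrary: k) (auto simp: rho_N_def)

lemma rho_N_unit_vector:
  "i < length N \<Longrightarrow> rho_N N ((replicate (length N) 0)[i := 1]) = mat 1 + N ! i"
proof (induction N arbitrary: i)
  case (Cons M N)
  then show ?case
    by (cases i) simp_all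
qed simp

lemma rho_N_commute:
  assumes "\<forall>M\<in>set N. X ** (mat 1 + M) = (mat 1 + M) ** X"
  shows "X ** rho_N N a = rho_N N a ** X"
  unfolding rho_N_def
proof (rule commute_mprod_list, rule ballI)
  fix U
  assume "U \<in> set (map2 (\<lambda>M e. mpow (mat 1 + M) e) N a)"
  then obtain M e where "M \<in> set N" and "U = mpow (mat 1 + M) e"
    by (auto dest: set_zip_leftD)
  then show "X ** U = U ** X"
    using assms commute_mpow by blast
qed

lemma invertible_rho_N:
  fixes N :: "('a::field^'n^'n) list"
  assumes "\<forall>M\<in>set N. mpow (mat 1 + M) p = mat 1" and "0 < p"
  shows "invertible (rho_N N a)"
  unfolding rho_N_def
proof (rule invertible_mprod_list, rule ballI)
  fix U
  assume "U \<in> set (map2 (\<lambda>M e. mpow (mat 1 + M) e) N a)"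
  then obtain M e where "M \<in> set N" and "U = mpow (mat 1 + M) e"
    by (auto dest: set_zip_leftD)
  then show "invertible U"
    using assms invertible_if_mpow_eq_mat_1 invertible_mpow by blast
qed

lemma rho_N_Zp_add:
  assumes "length a = length N" and "length b = length N"
    and "\<forall>M\<in>set N. mpow (mat 1 + M) p = mat 1"
    and "\<forall>M\<in>set N. \<forall>M'\<in>set N. M ** M' = M' ** M"
  shows "rho_N N (Zp_add p a b) = rho_N N a ** rho_N N b"
  using assms
proof (induction N arbitrary: a b)
  case Nil
  then show ?case by simp
next
  case (Cons M N)
  obtain x a' y b' where a: "a = x # a'" and b: "b = y # b'"
    using Cons.prems(1,2) by (metis length_Suc_conv)
  let ?U = "mat 1 + M"
  have commute_N: "\<forall>M\<in>set N. \<forall>M'\<in>set N. M ** M' = M' ** M"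
    using Cons.prems(4) by (meson list.set_intros(2))
  have IH: "rho_N N (Zp_add p a' b') = rho_N N a' ** rho_N N b'"
    using Cons.prems(1-3) by (intro Cons.IH[OF _ _ _ commute_N]) (simp_all add: a b)
  have "M ** M' = M' ** M" if "M' \<in> set N" for M'
    using Cons.prems(4) that by (meson list.set_intros)
  then have "?U ** (mat 1 + M') = (mat 1 + M') ** ?U" if "M' \<in> set N" for M'
    using that by (simp add: matrix_add_ldistrib matrix_add_rdistrib add_ac)
  then have swap: "mpow ?U y ** rho_N N a' = rho_N N a' ** mpow ?U y"
    by (intro rho_N_commute) (simp add: commute_mpow)
  have "rho_N (M # N) (Zp_add p a b) = mpow ?U x ** mpow ?U y ** (rho_N N a' ** rho_N N b')"
    using Cons.prems(3) by (simp add: a b Zp_add_def mpow_mod mpow_add flip: IH)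
  also have "\<dots> = mpow ?U x ** (mpow ?U y ** rho_N N a') ** rho_N N b'"
    by (simp only: matrix_mul_assoc)
  also have "\<dots> = (mpow ?U x ** rho_N N a') ** (mpow ?U y ** rho_N N b')"
    by (simp only: swap matrix_mul_assoc)
  finally show ?case
    by (simp add: a b)
qed

lemma grp_hom_rho_N:
  fixes N :: "('a::field^'n^'n) list"
  assumes p: "prime CHAR('a)" and N: "N \<in> Ncal r"
  shows "grp_hom r (rho_N N)"
  unfolding grp_hom_def
proof (intro conjI ballI)
  have "length N = r" and nilpotent: "\<forall>M\<in>set N. mpow M CHAR('a) = 0"
    and commute: "\<forall>M\<in>set N. \<forall>M'\<in>set N. M ** M' = M' ** M"
    using N unfolding Ncal_iff by blast+
  have unipotent: "\<forall>M\<in>set N. mpow (mat 1 + M) CHAR('a) = mat 1"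
    using p nilpotent mpow_one_plus_CHAR by blast
  fix a b
  show "invertible (rho_N N a)"
    using invertible_rho_N[OF unipotent] prime_gt_0_nat[OF p] .
  assume "a \<in> Zp_pow CHAR('a) r" and "b \<in> Zp_pow CHAR('a) r"
  with \<open>length N = r\<close> show "rho_N N (Zp_add CHAR('a) a b) = rho_N N a ** rho_N N b"
    by (intro rho_N_Zp_add[OF _ _ unipotent commute]) (simp_all add: Zp_pow_def)
qed

text \<open>The tuple is recovered from \<open>\<rho>\<close> on the unit vectors; this is the uniqueness
  behind the \<open>THE\<close> in \<^const>\<open>pi_map\<close>.\<close>

lemma rho_N_eq_on_Zp_pow_imp_eq:
  fixes N N' :: "('a::field^'n^'n) list"
  assumes "length N = r" and "length N' = r" and "1 < CHAR('a)"
    and "\<forall>a\<in>Zp_pow CHAR('a) r. rho_N N a = rho_N N' a"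
  shows "N = N'"
proof (rule nth_equalityI)
  show "length N = length N'"
    using assms by simp
  fix i
  assume i: "i < length N"
  have "(replicate r 0)[i := 1] \<in> Zp_pow CHAR('a) r"
    using assms(1,3) i by (auto simp: Zp_pow_def in_set_conv_nth nth_list_update)
  then show "N ! i = N' ! i"
    using assms i rho_N_unit_vector[of i N] rho_N_unit_vector[of i N'] by simp
qed

lemma pi_map_rho_N:
  fixes N :: "('a::field^'n^'n) list"
  assumes "N \<in> Ncal r" and "0 < r" and "1 < CHAR('a)"
  shows "pi_map r (rho_N N) = mprod_list (map (\<lambda>i. Exp (Tpow_mat (CHAR('a) ^ i) (N ! i))) [0..<r])"
proof -
  have "(THE N'. N' \<in> Ncal r \<and> (\<forall>a\<in>Zp_pow CHAR('a) r. rho_N N a = rho_N N' a)) = N"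
  proof (rule the_equality)
    fix N'
    assume N': "N' \<in> Ncal r \<and> (\<forall>a\<in>Zp_pow CHAR('a) r. rho_N N a = rho_N N' a)"
    have "N = N'"
      using N' assms(1,3) unfolding Ncal_iff
      by (intro rho_N_eq_on_Zp_pow_imp_eq[of N r N']) blast+
    then show "N' = N" ..
  qed (use assms(1) in simp)
  then show ?thesis
    using assms(2) by (simp add: pi_map_def)
qed

lemma divided_power_seq_CHAR_powers_in_Ncal:
  assumes c: "divided_power_seq (c :: nat \<Rightarrow> 'a::field^'n^'n)" and p: "prime CHAR('a)"
  shows "map (\<lambda>i. c (CHAR('a) ^ i)) [0..<r] \<in> Ncal r"
proof -
  have "mpow (c (CHAR('a) ^ i)) CHAR('a) = 0" for i
    using divided_power_seq_nilpotent[OF divided_power_seq_CHAR_power_multiples[OF c p, of i]]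
      prime_gt_0_nat[OF p] by simp
  then show ?thesis
    using divided_power_seq_commute[OF c] by (auto simp: Ncal_iff)
qed

theorem lemma2p2:
  fixes A :: "'a::alg_closed_field poly^'n^'n"
  assumes "prime CHAR('a)"
    and "exp_matrix A"
  shows "\<exists>r \<rho>. grp_hom r (\<rho> :: nat list \<Rightarrow> 'a^'n^'n) \<and> pi_map r \<rho> = A"
proof -
  let ?p = "CHAR('a)"
  define c where "c = coeff_mat A"
  have c: "divided_power_seq c"
    unfolding c_def using assms(2) by (rule exp_matrix_divided_power_seq)
  have p: "1 < ?p"
    using assms(1) by (rule prime_gt_1_nat)
  obtain r where "0 < r" and deg: "\<forall>j l. degree (A $ j $ l) < ?p ^ r"
    using ex_degree_less_power[OF p] by blast
  define N where "N = map (\<lambda>i. c (?p ^ i)) [0..<r]"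
  have N: "N \<in> Ncal r"
    unfolding N_def using c assms(1) by (rule divided_power_seq_CHAR_powers_in_Ncal)
  have "pi_map r (rho_N N) = mprod_list (map (\<lambda>i. Exp (Tpow_mat (?p ^ i) (N ! i))) [0..<r])"
    by (rule pi_map_rho_N[OF N \<open>0 < r\<close> p])
  also have "\<dots> = mprod_list (map (\<lambda>i. Exp (Tpow_mat (1 * ?p ^ i) (c (?p ^ i)))) [0..<r])"
    by (intro arg_cong[where f = mprod_list] map_cong) (simp_all add: N_def)
  also have "\<dots> = mat_series 1 (?p ^ r) c"
    using mat_series_CHAR_power_eq_prod[OF c assms(1)] by simp
  also have "\<dots> = A"
    unfolding c_def using deg by (intro mat_series_coeff_mat) blast
  finally show ?thesis
    using grp_hom_rho_N[OF assms(1) N] by blast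
qed

end
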